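(* Let $\mathbb{K}\in\{\mathbb{R},\mathbb{C}\}$ and $\mathcal{A}=(A_1,\ldots,A_d)$ positive semidefinite matrices in $\mathbb{K}^{n\times n}$. For all positive integers $k,m$ with $mk\le d$, $$\mathrm{SRel}_{mk}(\mathcal{A})\le\mathrm{SRel}_k(\mathcal{A}).$$
   Context: $\langle x,y\rangle=x^\dagger y$ with $\dagger$ the (conjugate) transpose, $\|x\|^2=\langle x,x\rangle$. A real polynomial $f$ is written $f\succeq0$ if it is a sum of squares of real polynomials; when $\mathbb{K}=\mathbb{C}$, polynomials in $x$ are regarded as real polynomials in the $2n$ real variables $\operatorname{Re}x,\operatorname{Im}x$. Let $\mathcal{S}_k$ be the set of $k$-element subsets of $\{1,\ldots,d\}$, and for $t\in\mathbb{R}^d$, $E_k(t)=\binom dk^{-1}\sum_{I\in\mathcal{S}_k}\prod_{i\in I}t_i$. Define $\mathrm{SRel}_k(\mathcal{A})=\inf\{\lambda^{1/k}:\ \lambda\ge0,\ \lambda\|x\|^{2k}-E_k(\langle x,A_1x\rangle,\ldots,\langle x,A_dx\rangle)\succeq0\}$. *)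

theory Defs
  imports "HOL-Analysis.Analysis"
begin

text \<open>Real polynomial functions in the real variables indexed by type 'v
  (over an infinite field, polynomial functions and polynomials correspond).\<close>
inductive poly_fun :: "(('v \<Rightarrow> real) \<Rightarrow> real) \<Rightarrow> bool" where
  pf_const: "poly_fun (\<lambda>x. c)"
| pf_var: "poly_fun (\<lambda>x. x v)"
| pf_add: "poly_fun p \<Longrightarrow> poly_fun q \<Longrightarrow> poly_fun (\<lambda>x. p x + q x)"
| pf_mult: "poly_fun p \<Longrightarrow> poly_fun q \<Longrightarrow> poly_fun (\<lambda>x. p x * q x)"

definition sos :: "(('v \<Rightarrow> real) \<Rightarrow> real) \<Rightarrow> bool" where
  "sos f \<longleftrightarrow> (\<exists>gs. (\<forall>g\<in>set gs. poly_fun g) \<and>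
                 f = (\<lambda>x. \<Sum>g\<leftarrow>gs. (g x)^2))"

definition Esym :: "nat \<Rightarrow> nat \<Rightarrow> (nat \<Rightarrow> real) \<Rightarrow> real" where
  "Esym d k t = (\<Sum>I\<in>{I. I \<subseteq> {1..d} \<and> card I = k}. \<Prod>i\<in>I. t i) / real (d choose k)"

text \<open>Generic SRel_k, given the squared norm polynomial and the quadratic forms
  q i = <x, A_i x> as real polynomial functions.\<close>
definition SRel_gen :: "nat \<Rightarrow> nat \<Rightarrow> (('v \<Rightarrow> real) \<Rightarrow> real)
     \<Rightarrow> (nat \<Rightarrow> ('v \<Rightarrow> real) \<Rightarrow> real) \<Rightarrow> real" where
  "SRel_gen d k nsq q = Inf {root k lam | lam. lam \<ge> 0 \<and>
      sos (\<lambda>x. lam * (nsq x)^k - Esym d k (\<lambda>i. q i x))}"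

definition psd_real :: "real^'n^'n \<Rightarrow> bool" where
  "psd_real A \<longleftrightarrow> transpose A = A \<and> (\<forall>x. 0 \<le> x \<bullet> (A *v x))"

definition SRel_real :: "nat \<Rightarrow> nat \<Rightarrow> (nat \<Rightarrow> real^'n^'n) \<Rightarrow> real" where
  "SRel_real d k A = SRel_gen d k
     (\<lambda>x::'n \<Rightarrow> real. \<Sum>i\<in>UNIV. (x i)^2)
     (\<lambda>l x. \<Sum>i\<in>UNIV. \<Sum>j\<in>UNIV. x i * (A l $ i $ j) * x j)"

text \<open>Complex case: K = C, x \<in> C^n viewed through the 2n real variables
  Re x_i = v (i,True), Im x_i = v (i,False).\<close>
definition hermitian :: "complex^'n^'n \<Rightarrow> bool" where
  "hermitian A \<longleftrightarrow> (\<forall>i j. A $ i $ j = cnj (A $ j $ i))"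

definition cquad :: "complex^'n^'n \<Rightarrow> ('n \<Rightarrow> complex) \<Rightarrow> complex" where
  "cquad A x = (\<Sum>i\<in>UNIV. \<Sum>j\<in>UNIV. cnj (x i) * (A $ i $ j) * x j)"

definition psd_complex :: "complex^'n^'n \<Rightarrow> bool" where
  "psd_complex A \<longleftrightarrow> hermitian A \<and> (\<forall>x. 0 \<le> Re (cquad A x))"

definition cvec :: "('n \<times> bool \<Rightarrow> real) \<Rightarrow> 'n \<Rightarrow> complex" where
  "cvec v i = Complex (v (i, True)) (v (i, False))"

definition SRel_complex :: "nat \<Rightarrow> nat \<Rightarrow> (nat \<Rightarrow> complex^'n^'n) \<Rightarrow> real" where
  "SRel_complex d k A = SRel_gen d k
     (\<lambda>v::'n \<times> bool \<Rightarrow> real. \<Sum>i\<in>UNIV. (cmod (cvec v i))^2)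
     (\<lambda>l v. Re (cquad (A l) (cvec v)))"

end

theory Submission
  imports Defs "HOL-Combinatorics.Permutations"
begin

text \<open>
  Each E_k is an average of products of the quadratic forms t_i = <x, A_i x>, which are
  sums of squares and bounded by a multiple of the squared norm.  The heart of the
  argument is that E_a E_b - E_(a+b) is a sum of squares: after symmetrising over all
  permutations of the indices, E_a E_b becomes an average of symmetrised monomials with
  exponents in {0,1,2}, and each exponent pattern (2,0) can be smoothed to (1,1) at the
  cost of the sum of squares of the terms prod t^beta (t_p - t_q)^2.  Hence E_k^m - E_(mk)
  is a sum of squares, and a certificate lam |x|^(2k) - E_k turns into the certificate
  lam^m |x|^(2mk) - E_(mk) via a^m - b^m = (a - b)(a^(m-1) + ... + b^(m-1)).
\<close>

subsection \<open>Polynomial functions and sums of squares\<close>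

lemma poly_fun_diff: "poly_fun p \<Longrightarrow> poly_fun q \<Longrightarrow> poly_fun (\<lambda>x. p x - q x)"
  using pf_add[OF _ pf_mult[OF pf_const, of q "-1"]] by simp

lemma poly_fun_sum: "(\<And>i. i \<in> S \<Longrightarrow> poly_fun (f i)) \<Longrightarrow> poly_fun (\<lambda>x. \<Sum>i\<in>S. f i x)"
  by (induction S rule: infinite_finite_induct) (simp_all add: pf_const pf_add)

lemma poly_fun_sum_squares: "\<forall>g\<in>set gs. poly_fun g \<Longrightarrow> poly_fun (\<lambda>x. \<Sum>g\<leftarrow>gs. (g x)\<^sup>2)"
proof (induction gs)
  case (Cons g gs)
  then have "poly_fun (\<lambda>x. g x * g x + (\<Sum>g\<leftarrow>gs. (g x)\<^sup>2))"
    by (simp add: pf_add pf_mult)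
  then show ?case by (simp add: power2_eq_square)
qed (simp add: pf_const)

lemma poly_fun_sos: "sos f \<Longrightarrow> poly_fun f"
  unfolding sos_def using poly_fun_sum_squares by blast

lemma sos_zero: "sos (\<lambda>x. 0)"
  unfolding sos_def by (rule exI[of _ "[]"]) simp

lemma sos_square: "poly_fun g \<Longrightarrow> sos (\<lambda>x. (g x)\<^sup>2)"
  unfolding sos_def by (rule exI[of _ "[g]"]) simp

lemma sos_one: "sos (\<lambda>x. 1)"
  using sos_square[OF pf_const[of 1]] by simp

lemma sos_cong: "sos f \<Longrightarrow> (\<And>x. f x = g x) \<Longrightarrow> sos g"
  by (metis ext)

lemma sos_add: "sos f \<Longrightarrow> sos g \<Longrightarrow> sos (\<lambda>x. f x + g x)"
  unfolding sos_def
proof (elim exE conjE)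
  fix gs hs assume "\<forall>g\<in>set gs. poly_fun g" "f = (\<lambda>x. \<Sum>g\<leftarrow>gs. (g x)\<^sup>2)"
    "\<forall>h\<in>set hs. poly_fun h" "g = (\<lambda>x. \<Sum>h\<leftarrow>hs. (h x)\<^sup>2)"
  then show "\<exists>ks. (\<forall>k\<in>set ks. poly_fun k) \<and> (\<lambda>x. f x + g x) = (\<lambda>x. \<Sum>k\<leftarrow>ks. (k x)\<^sup>2)"
    by (intro exI[of _ "gs @ hs"]) auto
qed

lemma sum_list_squares_mult:
  fixes gs hs :: "('a \<Rightarrow> real) list"
  shows "(\<Sum>g\<leftarrow>gs. (g x)\<^sup>2) * (\<Sum>h\<leftarrow>hs. (h x)\<^sup>2) =
    (\<Sum>k\<leftarrow>concat (map (\<lambda>g. map (\<lambda>h x. g x * h x) hs) gs). (k x)\<^sup>2)"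
proof (induction gs)
  case (Cons g gs)
  have "(\<Sum>h\<leftarrow>hs. (g x * h x)\<^sup>2) = (g x)\<^sup>2 * (\<Sum>h\<leftarrow>hs. (h x)\<^sup>2)"
    by (simp add: power_mult_distrib sum_list_const_mult)
  with Cons show ?case by (simp add: distrib_right o_def)
qed simp

lemma sos_mult: "sos f \<Longrightarrow> sos g \<Longrightarrow> sos (\<lambda>x. f x * g x)"
  unfolding sos_def
proof (elim exE conjE)
  fix gs hs assume "\<forall>g\<in>set gs. poly_fun g" "f = (\<lambda>x. \<Sum>g\<leftarrow>gs. (g x)\<^sup>2)"
    "\<forall>h\<in>set hs. poly_fun h" "g = (\<lambda>x. \<Sum>h\<leftarrow>hs. (h x)\<^sup>2)"
  then show "\<exists>ks. (\<forall>k\<in>set ks. poly_fun k) \<and> (\<lambda>x. f x * g x) = (\<lambda>x. \<Sum>k\<leftarrow>ks. (k x)\<^sup>2)"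
    by (intro exI[of _ "concat (map (\<lambda>g. map (\<lambda>h x. g x * h x) hs) gs)"])
      (auto simp: sum_list_squares_mult intro: pf_mult)
qed

lemma sos_cmult: "0 \<le> c \<Longrightarrow> sos f \<Longrightarrow> sos (\<lambda>x. c * f x)"
  using sos_mult[OF sos_square[OF pf_const[of "sqrt c"]]] by simp

lemma sos_sum: "(\<And>i. i \<in> S \<Longrightarrow> sos (f i)) \<Longrightarrow> sos (\<lambda>x. \<Sum>i\<in>S. f i x)"
  by (induction S rule: infinite_finite_induct) (simp_all add: sos_zero sos_add)

lemma sos_prod: "(\<And>i. i \<in> S \<Longrightarrow> sos (f i)) \<Longrightarrow> sos (\<lambda>x. \<Prod>i\<in>S. f i x)"
  by (induction S rule: infinite_finite_induct) (simp_all add: sos_one sos_mult)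

lemma sos_power: "sos f \<Longrightarrow> sos (\<lambda>x. f x ^ n)"
  by (induction n) (simp_all add: sos_one sos_mult)

lemma sos_norm2: "sos (\<lambda>x::'v::finite \<Rightarrow> real. \<Sum>j\<in>UNIV. (x j)\<^sup>2)"
  by (intro sos_sum sos_square pf_var)


subsection \<open>Positive semidefinite quadratic forms\<close>

definition quad_form :: "('v::finite \<Rightarrow> 'v \<Rightarrow> real) \<Rightarrow> ('v \<Rightarrow> real) \<Rightarrow> real" where
  "quad_form M x = (\<Sum>i\<in>UNIV. \<Sum>j\<in>UNIV. x i * M i j * x j)"

definition lin_form :: "('v::finite \<Rightarrow> real) \<Rightarrow> ('v \<Rightarrow> real) \<Rightarrow> real" where
  "lin_form a x = (\<Sum>i\<in>UNIV. a i * x i)"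

lemma poly_fun_lin_form: "poly_fun (lin_form a)"
  unfolding lin_form_def by (intro poly_fun_sum pf_mult pf_const pf_var)

lemma quad_form_symmetrize: "quad_form (\<lambda>i j. (M i j + M j i) / 2) x = quad_form M x"
proof -
  have swap: "(\<Sum>i\<in>UNIV. \<Sum>j\<in>UNIV. x i * M j i * x j) = quad_form M x"
    unfolding quad_form_def by (subst sum.swap) (simp add: mult.commute mult.left_commute)
  have "quad_form (\<lambda>i j. (M i j + M j i) / 2) x
      = (quad_form M x + (\<Sum>i\<in>UNIV. \<Sum>j\<in>UNIV. x i * M j i * x j)) / 2"
    unfolding quad_form_def
    by (simp add: sum.distrib algebra_simps flip: sum_divide_distrib)
  then show ?thesis by (simp add: swap)
qed

lemma quad_form_unit: "quad_form M (\<lambda>i. of_bool (i = p)) = M p p"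
  by (simp add: quad_form_def Int_insert_left if_distrib cong: if_cong)

lemma quad_form_two_point:
  assumes "p \<noteq> j"
  shows "quad_form M (\<lambda>i. if i = p then s else if i = j then 1 else 0) = s * s * M p p + s * M p j + s * M j p + M j j"
proof -
  let ?x = "(\<lambda>i. if i = p then s else if i = j then 1 else 0)"
  have "quad_form M ?x = (\<Sum>i\<in>UNIV. ?x i * (\<Sum>k\<in>UNIV. M i k * ?x k))"
    unfolding quad_form_def by (simp add: sum_distrib_left mult.assoc)
  also have "\<And>i. (\<Sum>k\<in>UNIV. M i k * ?x k) = s * M i p + M i j"
  proof -
    fix i
    have "(\<Sum>k\<in>UNIV. M i k * ?x k) = (\<Sum>k\<in>UNIV. (if k = p then s * M i p else 0) + (if k = j then M i j else 0))"
      by (rule sum.cong) (use assms in auto)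
    also have "\<dots> = s * M i p + M i j" by (simp add: sum.distrib)
    finally show "(\<Sum>k\<in>UNIV. M i k * ?x k) = s * M i p + M i j" .
  qed
  then have "(\<Sum>i\<in>UNIV. ?x i * (\<Sum>k\<in>UNIV. M i k * ?x k)) = (\<Sum>i\<in>UNIV. ?x i * (s * M i p + M i j))"
    by simp
  also have "\<dots> = (\<Sum>i\<in>UNIV. (if i = p then s * (s * M p p + M p j) else 0) + (if i = j then (s * M j p + M j j) else 0))"
    by (rule sum.cong) (use assms in auto)
  also have "\<dots> = s * s * M p p + s * M p j + s * M j p + M j j"
    by (simp add: sum.distrib algebra_simps)
  finally show ?thesis .
qed

lemma psd_zero_diagonal_imp_zero_row:
  assumes psd: "\<forall>x. 0 \<le> quad_form M x" and sym: "\<forall>i j. M i j = M j i" and "M p p = 0"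
  shows "M p j = 0"
proof (rule ccontr)
  assume ne: "M p j \<noteq> 0"
  then have pj: "p \<noteq> j" using \<open>M p p = 0\<close> by auto
  define s where "s = - (M j j + 1) / (2 * M p j)"
  have "quad_form M (\<lambda>i. if i = p then s else if i = j then 1 else 0) = 2 * s * M p j + M j j"
    using quad_form_two_point[OF pj] \<open>M p p = 0\<close> sym by (simp add: algebra_simps)
  also have "\<dots> = -1" using ne by (simp add: s_def field_simps)
  finally show False using psd by (metis neg_0_le_iff_le not_one_le_zero)
qed

lemma quad_form_schur_split:
  assumes sym: "\<forall>i j. M i j = M j i" and pos: "0 < M p p"
  shows "quad_form M x = (lin_form (\<lambda>i. M p i / sqrt (M p p)) x)\<^sup>2
      + quad_form (\<lambda>i j. M i j - M i p * M p j / M p p) x"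
proof -
  let ?L = "\<Sum>i\<in>UNIV. M p i * x i"
  have "(\<Sum>i\<in>UNIV. \<Sum>j\<in>UNIV. x i * M i p * (M p j * x j) / M p p) = ?L * ?L / M p p"
    using sym by (simp add: sum_product sum_divide_distrib mult.commute)
  moreover have "(lin_form (\<lambda>i. M p i / sqrt (M p p)) x)\<^sup>2 = ?L * ?L / M p p"
    using pos by (simp add: lin_form_def power2_eq_square flip: sum_divide_distrib)
  ultimately show ?thesis
    unfolding quad_form_def by (simp add: sum_subtractf algebra_simps)
qed

lemma psd_schur_complement:
  assumes psd: "\<forall>x. 0 \<le> quad_form M x" and sym: "\<forall>i j. M i j = M j i" and pos: "0 < M p p"
  shows "0 \<le> quad_form (\<lambda>i j. M i j - M i p * M p j / M p p) x"
proof -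
  let ?M' = "\<lambda>i j. M i j - M i p * M p j / M p p"
  define c where "c = (\<Sum>i\<in>UNIV. M p i * x i) / M p p"
  define y where "y i = x i - c * of_bool (i = p)" for i
  have "quad_form ?M' y = quad_form ?M' x"
    unfolding quad_form_def using pos sym
    by (intro sum.cong refl) (auto simp: y_def)
  moreover have "(\<Sum>i\<in>UNIV. M p i * y i) = (\<Sum>i\<in>UNIV. M p i * x i) - M p p * c"
    by (simp add: y_def right_diff_distrib sum_subtractf mult.assoc[symmetric])
  then have "(\<Sum>i\<in>UNIV. M p i * y i) = 0"
    using pos by (simp add: c_def)
  then have "lin_form (\<lambda>i. M p i / sqrt (M p p)) y = 0"
    by (simp add: lin_form_def flip: sum_divide_distrib)
  ultimately have "quad_form M y = quad_form ?M' x"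
    using quad_form_schur_split[OF sym pos, of y] by simp
  then show ?thesis using psd by metis
qed

lemma psd_quad_form_sum_squares_supported:
  assumes "finite S" and "\<forall>x. 0 \<le> quad_form M x" and "\<forall>i j. M i j = M j i"
    and "\<forall>i j. i \<notin> S \<longrightarrow> M i j = 0"
  shows "\<exists>ls. \<forall>x. quad_form M x = (\<Sum>a\<leftarrow>ls. (lin_form a x)\<^sup>2)"
  using assms
proof (induction S arbitrary: M rule: finite_induct)
  case empty
  then show ?case by (intro exI[of _ "[]"]) (simp add: quad_form_def)
next
  case (insert p S)
  have "0 \<le> M p p" using insert.prems(1) quad_form_unit by metis
  show ?case
  proof (cases "M p p = 0")
    case True
    then have "\<forall>j. M p j = 0"
      using psd_zero_diagonal_imp_zero_row insert.prems(1,2) by blast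
    then have "\<forall>i j. i \<notin> S \<longrightarrow> M i j = 0"
      using insert.prems(3) by auto
    with insert.IH insert.prems(1,2) show ?thesis by blast
  next
    case False
    with \<open>0 \<le> M p p\<close> have pos: "0 < M p p" by simp
    let ?M' = "\<lambda>i j. M i j - M i p * M p j / M p p"
    have "\<forall>i j. i \<notin> S \<longrightarrow> ?M' i j = 0"
    proof (intro allI impI)
      fix i j assume "i \<notin> S"
      then show "?M' i j = 0"
        using insert.prems(3) pos by (cases "i = p") auto
    qed
    moreover have "\<forall>i j. ?M' i j = ?M' j i"
      using insert.prems(2) by (simp add: mult.commute)
    ultimately obtain ls where "\<forall>x. quad_form ?M' x = (\<Sum>a\<leftarrow>ls. (lin_form a x)\<^sup>2)"
      using insert.IH psd_schur_complement[OF insert.prems(1,2) pos] by blast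
    then show ?thesis
      using quad_form_schur_split[OF insert.prems(2) pos]
      by (intro exI[of _ "(\<lambda>i. M p i / sqrt (M p p)) # ls"]) simp
  qed
qed

lemma psd_quad_form_sum_squares:
  assumes "\<forall>x. 0 \<le> quad_form M x"
  shows "\<exists>ls. \<forall>x. quad_form M x = (\<Sum>a\<leftarrow>ls. (lin_form a x)\<^sup>2)"
  using psd_quad_form_sum_squares_supported[of UNIV "\<lambda>i j. (M i j + M j i) / 2"] assms
  by (simp add: quad_form_symmetrize add.commute)

lemma sos_quad_form:
  assumes "\<forall>x. 0 \<le> quad_form M x"
  shows "sos (quad_form M)"
proof -
  obtain ls where "\<forall>x. quad_form M x = (\<Sum>a\<leftarrow>ls. (lin_form a x)\<^sup>2)"
    using psd_quad_form_sum_squares[OF assms] by blast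
  then have "quad_form M = (\<lambda>x. \<Sum>g\<leftarrow>map lin_form ls. (g x)\<^sup>2)"
    by (simp add: o_def fun_eq_iff)
  then show ?thesis
    unfolding sos_def using poly_fun_lin_form by (intro exI[of _ "map lin_form ls"]) auto
qed

lemma lagrange_identity:
  fixes a x :: "'v::finite \<Rightarrow> real"
  shows "(\<Sum>i\<in>UNIV. (a i)\<^sup>2) * (\<Sum>j\<in>UNIV. (x j)\<^sup>2) - (lin_form a x)\<^sup>2
       = (\<Sum>i\<in>UNIV. \<Sum>j\<in>UNIV. (a i * x j - a j * x i)\<^sup>2) / 2"
proof -
  have "(\<Sum>i\<in>UNIV. \<Sum>j\<in>UNIV. (a i * x j - a j * x i)\<^sup>2)
      = (\<Sum>i\<in>UNIV. \<Sum>j\<in>UNIV. (a i)\<^sup>2 * (x j)\<^sup>2) + (\<Sum>i\<in>UNIV. \<Sum>j\<in>UNIV. (a j)\<^sup>2 * (x i)\<^sup>2)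
        - 2 * (\<Sum>i\<in>UNIV. \<Sum>j\<in>UNIV. (a i * x i) * (a j * x j))"
    by (simp add: power2_diff sum.distrib sum_subtractf sum_distrib_left algebra_simps power_mult_distrib)
  also have "(\<Sum>i\<in>UNIV. \<Sum>j\<in>UNIV. (a j)\<^sup>2 * (x i)\<^sup>2) = (\<Sum>i\<in>UNIV. \<Sum>j\<in>UNIV. (a i)\<^sup>2 * (x j)\<^sup>2)"
    by (rule sum.swap)
  also have "(\<Sum>i\<in>UNIV. \<Sum>j\<in>UNIV. (a i)\<^sup>2 * (x j)\<^sup>2) = (\<Sum>i\<in>UNIV. (a i)\<^sup>2) * (\<Sum>j\<in>UNIV. (x j)\<^sup>2)"
    by (simp add: sum_product)
  also have "(\<Sum>i\<in>UNIV. \<Sum>j\<in>UNIV. (a i * x i) * (a j * x j)) = (lin_form a x)\<^sup>2"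
    by (simp add: lin_form_def power2_eq_square sum_product)
  finally show ?thesis by linarith
qed

lemma sos_cauchy_schwarz:
  fixes a :: "'v::finite \<Rightarrow> real"
  shows "sos (\<lambda>x. (\<Sum>i\<in>UNIV. (a i)\<^sup>2) * (\<Sum>j\<in>UNIV. (x j)\<^sup>2) - (lin_form a x)\<^sup>2)"
proof -
  have "sos (\<lambda>x. 1/2 * (\<Sum>i\<in>UNIV. \<Sum>j\<in>UNIV. (a i * x j - a j * x i)\<^sup>2))"
    by (intro sos_cmult sos_sum sos_square poly_fun_diff pf_mult pf_const pf_var) simp
  then show ?thesis by (rule sos_cong) (simp add: lagrange_identity)
qed

lemma psd_quad_form_le_norm2:
  assumes "\<forall>x. 0 \<le> quad_form M x"
  shows "\<exists>c. sos (\<lambda>x. c * (\<Sum>j\<in>UNIV. (x j)\<^sup>2) - quad_form M x)"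
proof -
  obtain ls where ls: "\<forall>x. quad_form M x = (\<Sum>a\<leftarrow>ls. (lin_form a x)\<^sup>2)"
    using psd_quad_form_sum_squares[OF assms] by blast
  have "sos (\<lambda>x. \<Sum>a\<leftarrow>ls. (\<Sum>i\<in>UNIV. (a i)\<^sup>2) * (\<Sum>j\<in>UNIV. (x j)\<^sup>2) - (lin_form a x)\<^sup>2)"
    by (induction ls) (simp_all add: sos_zero sos_add sos_cauchy_schwarz)
  then show ?thesis
    using ls by (intro exI[of _ "\<Sum>a\<leftarrow>ls. \<Sum>i\<in>UNIV. (a i)\<^sup>2"], elim sos_cong)
      (simp add: sum_list_subtractf sum_list_mult_const)
qed


subsection \<open>Counting permutations by the image of a fixed set\<close>

lemma ex_permutes_image:
  assumes "finite D" "A \<subseteq> D" "B \<subseteq> D" "card A = card B"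
  shows "\<exists>\<rho>. \<rho> permutes D \<and> \<rho> ` A = B"
proof -
  have fin: "finite A" "finite B" using assms finite_subset by auto
  obtain f where f: "bij_betw f A B" using finite_same_card_bij[OF fin assms(4)] by blast
  have "card (D - A) = card (D - B)"
    using assms fin by (simp add: card_Diff_subset)
  then obtain g where g: "bij_betw g (D - A) (D - B)"
    using finite_same_card_bij[of "D - A" "D - B"] assms by auto
  define \<rho> where "\<rho> x = (if x \<in> A then f x else if x \<in> D then g x else x)" for x
  have AB: "bij_betw \<rho> A B"
    using f by (rule bij_betw_cong[THEN iffD1, rotated]) (simp add: \<rho>_def)
  have "bij_betw \<rho> (D - A) (D - B)"
    using g by (rule bij_betw_cong[THEN iffD1, rotated]) (simp add: \<rho>_def)
  with AB have "bij_betw \<rho> (A \<union> (D - A)) (B \<union> (D - B))"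
    by (rule bij_betw_combine) auto
  moreover have "A \<union> (D - A) = D" "B \<union> (D - B) = D" using assms by auto
  ultimately have "\<rho> permutes D"
    by (intro bij_imp_permutes) (auto simp: \<rho>_def)
  with AB show ?thesis by (auto simp: bij_betw_def)
qed

lemma card_permutes_image_le:
  assumes "finite D" "\<rho> permutes D" "\<rho> ` A = B"
  shows "card {\<pi>. \<pi> permutes D \<and> \<pi> ` K = A} \<le> card {\<pi>. \<pi> permutes D \<and> \<pi> ` K = B}"
proof (rule card_inj_on_le[where f = "(\<circ>) \<rho>"])
  show "inj_on ((\<circ>) \<rho>) {\<pi>. \<pi> permutes D \<and> \<pi> ` K = A}"
  proof (rule inj_onI)
    fix \<pi>1 \<pi>2 assume "\<rho> \<circ> \<pi>1 = \<rho> \<circ> \<pi>2"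
    then show "\<pi>1 = \<pi>2" using permutes_inj[OF assms(2)] by (metis fun.inj_map_strong inj_eq)
  qed
  show "(\<circ>) \<rho> ` {\<pi>. \<pi> permutes D \<and> \<pi> ` K = A} \<subseteq> {\<pi>. \<pi> permutes D \<and> \<pi> ` K = B}"
    using assms(2,3) by (auto simp: permutes_compose image_comp[symmetric])
  show "finite {\<pi>. \<pi> permutes D \<and> \<pi> ` K = B}"
    by (rule finite_subset[OF _ finite_permutations[OF assms(1)]]) auto
qed

lemma card_permutes_image_eq:
  assumes "finite D" "\<rho> permutes D" "\<rho> ` A = B"
  shows "card {\<pi>. \<pi> permutes D \<and> \<pi> ` K = A} = card {\<pi>. \<pi> permutes D \<and> \<pi> ` K = B}"
proof (rule antisym)
  show "card {\<pi>. \<pi> permutes D \<and> \<pi> ` K = A} \<le> card {\<pi>. \<pi> permutes D \<and> \<pi> ` K = B}"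
    using card_permutes_image_le[OF assms] .
  have "inv \<rho> permutes D" using assms(2) by (rule permutes_inv)
  moreover have "inv \<rho> ` B = A" using assms(3) permutes_inj[OF assms(2)] by (metis image_inv_f_f)
  ultimately show "card {\<pi>. \<pi> permutes D \<and> \<pi> ` K = B} \<le> card {\<pi>. \<pi> permutes D \<and> \<pi> ` K = A}"
    by (rule card_permutes_image_le[OF assms(1)])
qed

text \<open>Every subset of the right size is hit by the same number of permutations.\<close>

lemma sum_permutes_image:
  fixes g :: "'a set \<Rightarrow> real"
  assumes "finite D" "K \<subseteq> D"
  shows "real (card D choose card K) * (\<Sum>\<pi>\<in>{\<pi>. \<pi> permutes D}. g (\<pi> ` K))
       = fact (card D) * (\<Sum>I\<in>{I. I \<subseteq> D \<and> card I = card K}. g I)"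
proof -
  let ?P = "{\<pi>. \<pi> permutes D}"
  let ?I = "{I. I \<subseteq> D \<and> card I = card K}"
  let ?fib = "\<lambda>I. {\<pi>. \<pi> permutes D \<and> \<pi> ` K = I}"
  have "finite ?P" using assms(1) by (rule finite_permutations)
  have "finite ?I" using assms(1) by (auto intro: finite_subset[of _ "Pow D"])
  have "(\<lambda>\<pi>. \<pi> ` K) ` ?P \<subseteq> ?I"
  proof clarify
    fix \<pi> assume \<pi>: "\<pi> permutes D"
    have "\<pi> ` K \<subseteq> \<pi> ` D" using assms(2) by (rule image_mono)
    then show "\<pi> ` K \<subseteq> D \<and> card (\<pi> ` K) = card K"
      using permutes_image[OF \<pi>] card_image[OF inj_on_subset[OF permutes_inj[OF \<pi>] subset_UNIV]]
      by simp
  qed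
  then have group: "(\<Sum>\<pi>\<in>?P. f (\<pi> ` K)) = (\<Sum>I\<in>?I. real (card (?fib I)) * f I)" for f :: "'a set \<Rightarrow> real"
    using sum.group[OF \<open>finite ?P\<close> \<open>finite ?I\<close>, of "\<lambda>\<pi>. \<pi> ` K" "\<lambda>\<pi>. f (\<pi> ` K)"] by simp
  define c where "c = card (?fib K)"
  have fiber: "card (?fib I) = c" if I: "I \<in> ?I" for I
  proof -
    have "\<exists>\<rho>. \<rho> permutes D \<and> \<rho> ` K = I"
      using ex_permutes_image[OF assms(1,2), of I] I by simp
    then obtain \<rho> where "\<rho> permutes D" "\<rho> ` K = I" by blast
    then show ?thesis
      unfolding c_def by (rule card_permutes_image_eq[OF assms(1), symmetric])
  qed
  have "real (fact (card D)) = (\<Sum>\<pi>\<in>?P. 1)"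
    using card_permutations[OF refl assms(1)] by simp
  also have "\<dots> = real c * real (card D choose card K)"
    using group[of "\<lambda>_. 1"] fiber n_subsets[OF assms(1)] by simp
  finally have "real (fact (card D)) = real c * real (card D choose card K)" .
  moreover have "(\<Sum>\<pi>\<in>?P. g (\<pi> ` K)) = real c * (\<Sum>I\<in>?I. g I)"
    using group[of g] fiber by (simp add: sum_distrib_left)
  ultimately show ?thesis by simp
qed

lemma sum_permutes_prod_image:
  assumes "j \<le> d"
  shows "(\<Sum>\<pi>\<in>{\<pi>. \<pi> permutes {1..d}}. \<Prod>i\<in>\<pi> ` {1..j}. t i x) = fact d * Esym d j (\<lambda>i. t i x)"
  using sum_permutes_image[of "{1..d}" "{1..j}" "\<lambda>I. \<Prod>i\<in>I. t i x"] assms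
  by (simp add: Esym_def field_simps)

subsection \<open>Symmetrised monomials\<close>

definition sym_monomial :: "nat \<Rightarrow> (nat \<Rightarrow> ('v \<Rightarrow> real) \<Rightarrow> real) \<Rightarrow> (nat \<Rightarrow> nat) \<Rightarrow> ('v \<Rightarrow> real) \<Rightarrow> real" where
  "sym_monomial d t \<beta> x = (\<Sum>\<pi>\<in>{\<pi>. \<pi> permutes {1..d}}. \<Prod>r\<in>{1..d}. t (\<pi> r) x ^ \<beta> r)"

lemma sym_monomial_cong:
  "(\<And>r. r \<in> {1..d} \<Longrightarrow> \<beta> r = \<beta>' r) \<Longrightarrow> sym_monomial d t \<beta> x = sym_monomial d t \<beta>' x"
  unfolding sym_monomial_def by (intro sum.cong prod.cong) auto

lemma sym_monomial_permute:
  assumes "\<rho> permutes {1..d}"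
  shows "sym_monomial d t (\<beta> \<circ> \<rho>) x = sym_monomial d t \<beta> x"
proof -
  let ?g = "\<lambda>\<pi>. \<Prod>r\<in>{1..d}. t (\<pi> r) x ^ \<beta> r"
  have "sym_monomial d t \<beta> x = (\<Sum>\<pi>\<in>{\<pi>. \<pi> permutes {1..d}}. ?g (\<pi> \<circ> inv \<rho>))"
    unfolding sym_monomial_def by (rule sum_permutations_compose_right[OF permutes_inv[OF assms]])
  also have "\<dots> = sym_monomial d t (\<beta> \<circ> \<rho>) x"
    unfolding sym_monomial_def
  proof (rule sum.cong[OF refl])
    fix \<pi>
    show "?g (\<pi> \<circ> inv \<rho>) = (\<Prod>r\<in>{1..d}. t (\<pi> r) x ^ (\<beta> \<circ> \<rho>) r)"
      using prod.permute[OF assms, of "\<lambda>r. t ((\<pi> \<circ> inv \<rho>) r) x ^ \<beta> r"]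
        permutes_inverses(2)[OF assms] by (simp add: o_def)
  qed
  finally show ?thesis by simp
qed

lemma prod_remove2:
  assumes "finite S" "p \<in> S" "q \<in> S" "p \<noteq> q"
  shows "(\<Prod>r\<in>S. f r) = f p * f q * (\<Prod>r\<in>S - {p, q}. f r)"
proof -
  have "(\<Prod>r\<in>S. f r) = f p * (\<Prod>r\<in>S - {p}. f r)" using assms by (simp add: prod.remove)
  also have "(\<Prod>r\<in>S - {p}. f r) = f q * (\<Prod>r\<in>S - {p} - {q}. f r)"
    using assms by (intro prod.remove) auto
  also have "S - {p} - {q} = S - {p, q}" by auto
  finally show ?thesis by (simp add: mult.assoc)
qed

lemma prod_power_of_bool:
  fixes f :: "'a \<Rightarrow> 'b::comm_monoid_mult"
  assumes "finite D" "J \<subseteq> D"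
  shows "(\<Prod>r\<in>D. f r ^ of_bool (r \<in> J)) = (\<Prod>r\<in>J. f r)"
proof -
  have "(\<Prod>r\<in>D. f r ^ of_bool (r \<in> J)) = (\<Prod>r\<in>D. if r \<in> J then f r else 1)"
    by (rule prod.cong) auto
  also have "\<dots> = (\<Prod>r\<in>J. f r)"
    using assms by (simp add: prod.If_cases Int_absorb1)
  finally show ?thesis .
qed

lemma sum_of_bool_mem: "finite D \<Longrightarrow> A \<subseteq> D \<Longrightarrow> (\<Sum>r\<in>D. of_bool (r \<in> A)) = card A"
  by (simp add: Int_absorb1)

lemma sym_monomial_of_bool_card:
  assumes "J \<subseteq> {1..d}" "card J = s"
  shows "sym_monomial d t (\<lambda>r. of_bool (r \<in> J)) x = sym_monomial d t (\<lambda>r. of_bool (r \<in> {1..s})) x"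
proof -
  have "s \<le> d" using assms card_mono[of "{1..d}" J] by simp
  then obtain \<rho> where \<rho>: "\<rho> permutes {1..d}" "\<rho> ` {1..s} = J"
    using ex_permutes_image[of "{1..d}" "{1..s}" J] assms by auto
  have "(\<lambda>r. of_bool (r \<in> J)) \<circ> \<rho> = (\<lambda>r. of_bool (r \<in> {1..s}) :: nat)"
    unfolding \<rho>(2)[symmetric] by (simp add: o_def inj_image_mem_iff[OF permutes_inj[OF \<rho>(1)]])
  then show ?thesis
    using sym_monomial_permute[OF \<rho>(1)] by metis
qed

lemma sym_monomial_Esym:
  assumes "j \<le> d"
  shows "sym_monomial d t (\<lambda>r. of_bool (r \<in> {1..j})) x = fact d * Esym d j (\<lambda>i. t i x)"
proof -
  have "(\<Prod>r\<in>{1..d}. t (\<pi> r) x ^ of_bool (r \<in> {1..j})) = (\<Prod>i\<in>\<pi> ` {1..j}. t i x)"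
    if "\<pi> permutes {1..d}" for \<pi>
  proof -
    have "(\<Prod>r\<in>{1..d}. t (\<pi> r) x ^ of_bool (r \<in> {1..j})) = (\<Prod>r\<in>{1..j}. t (\<pi> r) x)"
      by (rule prod_power_of_bool) (use assms in auto)
    also have "\<dots> = (\<Prod>i\<in>\<pi> ` {1..j}. t i x)"
      using prod.reindex[OF inj_on_subset[OF permutes_inj[OF that] subset_UNIV], of "\<lambda>i. t i x" "{1..j}"]
      by (simp add: o_def)
    finally show ?thesis .
  qed
  then show ?thesis
    unfolding sym_monomial_def sum_permutes_prod_image[OF assms, symmetric] by simp
qed

text \<open>Averaging over the transposition of p and q turns the difference into a sum of
  terms (\<Prod>r\<noteq>p,q. t_r^\<beta>_r) (t_p - t_q)^2.\<close>

lemma sym_monomial_smooth: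
  assumes sos_t: "\<And>i. i \<in> {1..d} \<Longrightarrow> sos (t i)"
    and pq: "p \<in> {1..d}" "q \<in> {1..d}" "p \<noteq> q" and "\<beta> p = 2" "\<beta> q = 0"
  shows "sos (\<lambda>x. sym_monomial d t \<beta> x - sym_monomial d t (\<beta>(p := 1, q := 1)) x)"
proof -
  let ?\<tau> = "Transposition.transpose p q"
  let ?P = "{\<pi>. \<pi> permutes {1..d}}"
  define R where "R \<pi> x = (\<Prod>r\<in>{1..d} - {p, q}. t (\<pi> r) x ^ \<beta> r)" for \<pi> x
  note split = prod_remove2[OF finite_atLeastAtMost pq]
  have key: "(\<Prod>r\<in>{1..d}. t (\<pi> r) x ^ \<beta> r) + (\<Prod>r\<in>{1..d}. t (\<pi> r) x ^ (\<beta> \<circ> ?\<tau>) r)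
        - 2 * (\<Prod>r\<in>{1..d}. t (\<pi> r) x ^ (\<beta>(p := 1, q := 1)) r)
      = R \<pi> x * (t (\<pi> p) x - t (\<pi> q) x)\<^sup>2" for \<pi> x
  proof -
    have "(\<Prod>r\<in>{1..d} - {p, q}. t (\<pi> r) x ^ (\<beta> \<circ> ?\<tau>) r) = R \<pi> x"
         "(\<Prod>r\<in>{1..d} - {p, q}. t (\<pi> r) x ^ (\<beta>(p := 1, q := 1)) r) = R \<pi> x"
      unfolding R_def by (auto intro!: prod.cong simp: transpose_def)
    then show ?thesis
      using split[of "\<lambda>r. t (\<pi> r) x ^ \<beta> r"] split[of "\<lambda>r. t (\<pi> r) x ^ (\<beta> \<circ> ?\<tau>) r"]
        split[of "\<lambda>r. t (\<pi> r) x ^ (\<beta>(p := 1, q := 1)) r"] pq \<open>\<beta> p = 2\<close> \<open>\<beta> q = 0\<close>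
      unfolding R_def by (simp add: power2_diff power2_eq_square algebra_simps)
  qed
  have "sos (\<lambda>x. 1/2 * (\<Sum>\<pi>\<in>?P. R \<pi> x * (t (\<pi> p) x - t (\<pi> q) x)\<^sup>2))"
  proof (intro sos_cmult sos_sum sos_mult)
    fix \<pi> assume "\<pi> \<in> ?P"
    then have "\<pi> r \<in> {1..d}" if "r \<in> {1..d}" for r
      using permutes_in_image[of \<pi> "{1..d}" r] that by simp
    then have "sos (t (\<pi> r))" if "r \<in> {1..d}" for r
      using sos_t that by blast
    then show "sos (R \<pi>)" "sos (\<lambda>x. (t (\<pi> p) x - t (\<pi> q) x)\<^sup>2)"
      unfolding R_def using pq
      by (auto intro!: sos_prod sos_power sos_square poly_fun_diff[OF poly_fun_sos poly_fun_sos])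
  qed simp
  moreover have "1/2 * (\<Sum>\<pi>\<in>?P. R \<pi> x * (t (\<pi> p) x - t (\<pi> q) x)\<^sup>2)
      = sym_monomial d t \<beta> x - sym_monomial d t (\<beta>(p := 1, q := 1)) x" for x
    using sym_monomial_permute[OF permutes_swap_id[OF pq(1,2)], of t \<beta> x]
    unfolding sym_monomial_def key[symmetric] sum_subtractf sum.distrib sum_distrib_left[symmetric]
    by simp
  ultimately show ?thesis by (rule sos_cong)
qed

lemma sym_monomial_eq_of_bool_prefix:
  assumes "\<forall>r\<in>{1..d}. \<beta> r \<le> 1" and "(\<Sum>r\<in>{1..d}. \<beta> r) = s"
  shows "sym_monomial d t \<beta> x = sym_monomial d t (\<lambda>r. of_bool (r \<in> {1..s})) x"
proof -
  define J where "J = {r\<in>{1..d}. \<beta> r = 1}"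
  have \<beta>_J: "\<beta> r = of_bool (r \<in> J)" if "r \<in> {1..d}" for r
    using assms(1) that le_Suc_eq[of "\<beta> r" 0] by (auto simp: J_def)
  have "s = (\<Sum>r\<in>{1..d}. of_bool (r \<in> J))"
    using assms(2) \<beta>_J by (metis sum.cong)
  also have "\<dots> = card J" by (rule sum_of_bool_mem) (auto simp: J_def)
  finally have "card J = s" by simp
  have "sym_monomial d t \<beta> x = sym_monomial d t (\<lambda>r. of_bool (r \<in> J)) x"
    by (rule sym_monomial_cong) (rule \<beta>_J)
  also have "\<dots> = sym_monomial d t (\<lambda>r. of_bool (r \<in> {1..s})) x"
    by (rule sym_monomial_of_bool_card[OF _ \<open>card J = s\<close>]) (auto simp: J_def)
  finally show ?thesis .
qed

lemma ex_zero_if_sum_le_card: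
  fixes \<beta> :: "'a \<Rightarrow> nat"
  assumes "finite D" "p \<in> D" "1 < \<beta> p" "sum \<beta> D \<le> card D"
  shows "\<exists>q\<in>D. \<beta> q = 0"
proof (rule ccontr)
  assume "\<not> ?thesis"
  then have "1 + of_bool (r = p) \<le> \<beta> r" if "r \<in> D" for r
    using that assms(3) by (cases "r = p") auto
  then have "(\<Sum>r\<in>D. 1 + of_bool (r = p)) \<le> sum \<beta> D"
    by (rule sum_mono)
  moreover have "(\<Sum>r\<in>D. 1 + of_bool (r = p)) = card D + (1::nat)"
    using assms(1,2) by (subst sum.distrib) (simp add: of_bool_def sum.delta)
  ultimately show False using assms(4) by simp
qed

lemma sym_monomial_reduce:
  assumes sos_t: "\<And>i. i \<in> {1..d} \<Longrightarrow> sos (t i)" and "s \<le> d"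
    and "\<forall>r. \<beta> r \<le> 2" and "(\<Sum>r\<in>{1..d}. \<beta> r) = s"
  shows "sos (\<lambda>x. sym_monomial d t \<beta> x - sym_monomial d t (\<lambda>r. of_bool (r \<in> {1..s})) x)"
  using assms(3,4)
proof (induction "card {r\<in>{1..d}. \<beta> r = 2}" arbitrary: \<beta>)
  case 0
  have "\<beta> r \<le> 1" if "r \<in> {1..d}" for r
  proof -
    have "\<beta> r \<noteq> 2" "\<beta> r \<le> 2" using 0 that by auto
    then show ?thesis by linarith
  qed
  then have "\<forall>r\<in>{1..d}. \<beta> r \<le> 1" by blast
  then have "sym_monomial d t \<beta> x = sym_monomial d t (\<lambda>r. of_bool (r \<in> {1..s})) x" for x
    using \<open>sum \<beta> {1..d} = s\<close> by (rule sym_monomial_eq_of_bool_prefix)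
  then show ?case by (simp add: sos_zero)
next
  case (Suc n)
  then obtain p where p: "p \<in> {1..d}" "\<beta> p = 2"
    by (metis (mono_tags, lifting) card.empty empty_Collect_eq nat.distinct(1))
  then obtain q where q: "q \<in> {1..d}" "\<beta> q = 0"
    using ex_zero_if_sum_le_card[of "{1..d}" p \<beta>] Suc.prems(2) \<open>s \<le> d\<close> by auto
  have "p \<noteq> q" using p q by auto
  define \<beta>' where "\<beta>' = \<beta>(p := 1, q := 1)"
  have "\<beta>' r + of_bool (r = p) = \<beta> r + of_bool (r = q)" for r
    using p q \<open>p \<noteq> q\<close> by (simp add: \<beta>'_def)
  then have "(\<Sum>r\<in>{1..d}. \<beta>' r) + 1 = (\<Sum>r\<in>{1..d}. \<beta> r) + 1"
    using sum.distrib[of \<beta>' "\<lambda>r. of_bool (r = p)" "{1..d}"] sum.distrib[of \<beta> "\<lambda>r. of_bool (r = q)" "{1..d}"]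
      p q by simp
  moreover have "{r\<in>{1..d}. \<beta>' r = 2} = {r\<in>{1..d}. \<beta> r = 2} - {p}"
    using p q \<open>p \<noteq> q\<close> by (auto simp: \<beta>'_def)
  then have "n = card {r\<in>{1..d}. \<beta>' r = 2}"
    using Suc.hyps(2) p by simp
  ultimately have "sos (\<lambda>x. sym_monomial d t \<beta>' x - sym_monomial d t (\<lambda>r. of_bool (r \<in> {1..s})) x)"
    using Suc.hyps(1) Suc.prems by (simp add: \<beta>'_def)
  moreover have "sos (\<lambda>x. sym_monomial d t \<beta> x - sym_monomial d t \<beta>' x)"
    unfolding \<beta>'_def using sym_monomial_smooth[OF sos_t p(1) q(1) \<open>p \<noteq> q\<close> p(2) q(2)] .
  ultimately show ?case
    by (rule sos_cong[OF sos_add]) simp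
qed

subsection \<open>Products of elementary symmetric polynomials\<close>

lemma sos_Esym:
  assumes "\<And>i. i \<in> {1..d} \<Longrightarrow> sos (t i)"
  shows "sos (\<lambda>x. Esym d j (\<lambda>i. t i x))"
  unfolding Esym_def divide_inverse using assms
  by (subst mult.commute, intro sos_cmult sos_sum sos_prod) auto

lemma Esym_0: "Esym d 0 t = 1"
proof -
  have "{I. I \<subseteq> {1..d} \<and> card I = 0} = {{}}"
    by (auto simp: card_eq_0_iff dest: finite_subset[OF _ finite_atLeastAtMost])
  then show ?thesis unfolding Esym_def by simp
qed

lemma prod_permutes_image_mult:
  fixes f :: "nat \<Rightarrow> 'a::comm_monoid_mult"
  assumes "a + b \<le> d" "\<pi> permutes {1..d}" "\<tau> permutes {1..d}"
  shows "(\<Prod>i\<in>\<pi> ` {1..a}. f i) * (\<Prod>i\<in>(\<pi> \<circ> \<tau>) ` {1..b}. f i)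
      = (\<Prod>r\<in>{1..d}. f (\<pi> r) ^ (of_bool (r \<in> {1..a}) + of_bool (r \<in> \<tau> ` {1..b})))"
proof -
  have "inj \<pi>" "inj \<tau>" using assms(2,3) by (auto dest: permutes_inj)
  then have inj: "inj_on \<pi> A" "inj_on \<tau> A" "inj_on (\<pi> \<circ> \<tau>) A" for A
    by (auto intro: inj_on_subset[OF _ subset_UNIV] inj_compose)
  have "\<tau> ` {1..b} \<subseteq> {1..d}"
    using assms image_mono[of "{1..b}" "{1..d}" \<tau>] by (simp add: permutes_image)
  then have "(\<Prod>r\<in>{1..d}. f (\<pi> r) ^ of_bool (r \<in> \<tau> ` {1..b})) = (\<Prod>r\<in>{1..b}. f (\<pi> (\<tau> r)))"
    by (simp add: prod_power_of_bool prod.reindex inj)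
  also have "\<dots> = (\<Prod>i\<in>(\<pi> \<circ> \<tau>) ` {1..b}. f i)"
    unfolding prod.reindex[OF inj(3)] by (simp add: o_def)
  moreover have "(\<Prod>r\<in>{1..d}. f (\<pi> r) ^ of_bool (r \<in> {1..a})) = (\<Prod>r\<in>{1..a}. f (\<pi> r))"
    by (rule prod_power_of_bool) (use assms in auto)
  moreover have "\<dots> = (\<Prod>i\<in>\<pi> ` {1..a}. f i)"
    by (simp add: prod.reindex inj)
  ultimately show ?thesis by (simp add: power_add prod.distrib)
qed

text \<open>Writing both factors as averages over permutations and substituting
  \<sigma> = \<pi> \<circ> \<tau> in the second, E_a E_b becomes an average over \<tau> of symmetrised monomials
  whose exponents are the indicator of {1..a} plus the indicator of \<tau> ` {1..b}.\<close>

lemma Esym_mult_eq_sum_sym_monomial: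
  assumes "a + b \<le> d"
  shows "(fact d)\<^sup>2 * (Esym d a (\<lambda>i. t i x) * Esym d b (\<lambda>i. t i x)) =
    (\<Sum>\<tau>\<in>{\<tau>. \<tau> permutes {1..d}}.
       sym_monomial d t (\<lambda>r. of_bool (r \<in> {1..a}) + of_bool (r \<in> \<tau> ` {1..b})) x)"
proof -
  let ?P = "{\<pi>. \<pi> permutes {1..d}}"
  let ?F = "\<lambda>j \<pi>. \<Prod>i\<in>\<pi> ` {1..j}. t i x"
  have "a \<le> d" "b \<le> d" using assms by auto
  then have "(fact d)\<^sup>2 * (Esym d a (\<lambda>i. t i x) * Esym d b (\<lambda>i. t i x))
      = (\<Sum>\<pi>\<in>?P. ?F a \<pi>) * (\<Sum>\<sigma>\<in>?P. ?F b \<sigma>)"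
    using sum_permutes_prod_image[of a d t x] sum_permutes_prod_image[of b d t x]
    by (simp add: power2_eq_square)
  also have "\<dots> = (\<Sum>\<pi>\<in>?P. \<Sum>\<tau>\<in>?P. ?F a \<pi> * ?F b (\<pi> \<circ> \<tau>))"
    unfolding sum_product
  proof (rule sum.cong[OF refl])
    fix \<pi> assume "\<pi> \<in> ?P"
    then show "(\<Sum>\<sigma>\<in>?P. ?F a \<pi> * ?F b \<sigma>) = (\<Sum>\<tau>\<in>?P. ?F a \<pi> * ?F b (\<pi> \<circ> \<tau>))"
      using setum_permutations_compose_left[of \<pi> "{1..d}" "\<lambda>\<sigma>. ?F a \<pi> * ?F b \<sigma>"] by simp
  qed
  also have "\<dots> = (\<Sum>\<tau>\<in>?P. \<Sum>\<pi>\<in>?P. ?F a \<pi> * ?F b (\<pi> \<circ> \<tau>))"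
    by (rule sum.swap)
  also have "\<dots> = (\<Sum>\<tau>\<in>?P.
      sym_monomial d t (\<lambda>r. of_bool (r \<in> {1..a}) + of_bool (r \<in> \<tau> ` {1..b})) x)"
    unfolding sym_monomial_def
    by (intro sum.cong refl prod_permutes_image_mult[OF assms]) auto
  finally show ?thesis .
qed

lemma sos_Esym_mult_minus_Esym_add:
  assumes sos_t: "\<And>i. i \<in> {1..d} \<Longrightarrow> sos (t i)" and "a + b \<le> d"
  shows "sos (\<lambda>x. Esym d a (\<lambda>i. t i x) * Esym d b (\<lambda>i. t i x) - Esym d (a + b) (\<lambda>i. t i x))"
proof -
  let ?P = "{\<tau>. \<tau> permutes {1..d}}"
  define \<beta> where "\<beta> \<tau> r = (of_bool (r \<in> {1..a}) + of_bool (r \<in> \<tau> ` {1..b}) :: nat)"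
    for \<tau> :: "nat \<Rightarrow> nat" and r
  let ?base = "\<lambda>r. of_bool (r \<in> {1..a + b}) :: nat"
  have "sos (\<lambda>x. sym_monomial d t (\<beta> \<tau>) x - sym_monomial d t ?base x)" if "\<tau> \<in> ?P" for \<tau>
  proof (rule sym_monomial_reduce[OF sos_t \<open>a + b \<le> d\<close>])
    show "\<forall>r. \<beta> \<tau> r \<le> 2" by (simp add: \<beta>_def)
    have "\<tau> ` {1..b} \<subseteq> {1..d}"
      using that \<open>a + b \<le> d\<close> image_mono[of "{1..b}" "{1..d}" \<tau>] by (simp add: permutes_image)
    moreover have "{1..a} \<subseteq> {1..d}" using \<open>a + b \<le> d\<close> by auto
    ultimately have "(\<Sum>r\<in>{1..d}. \<beta> \<tau> r) = card {1..a} + card (\<tau> ` {1..b})"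
      unfolding \<beta>_def sum.distrib by (simp only: sum_of_bool_mem[OF finite_atLeastAtMost])
    also have "card (\<tau> ` {1..b}) = b"
      using that by (simp add: card_image inj_on_subset[OF permutes_inj subset_UNIV])
    finally show "(\<Sum>r\<in>{1..d}. \<beta> \<tau> r) = a + b" by simp
  qed
  then have "sos (\<lambda>x. 1 / (fact d)\<^sup>2 * (\<Sum>\<tau>\<in>?P. sym_monomial d t (\<beta> \<tau>) x - sym_monomial d t ?base x))"
    by (intro sos_cmult sos_sum) auto
  moreover have "1 / (fact d)\<^sup>2 * (\<Sum>\<tau>\<in>?P. sym_monomial d t (\<beta> \<tau>) x - sym_monomial d t ?base x)
      = Esym d a (\<lambda>i. t i x) * Esym d b (\<lambda>i. t i x) - Esym d (a + b) (\<lambda>i. t i x)" for x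
  proof -
    have "card ?P = fact d" using card_permutations[of "{1..d}" d] by simp
    then have "(\<Sum>\<tau>\<in>?P. sym_monomial d t ?base x) = (fact d)\<^sup>2 * Esym d (a + b) (\<lambda>i. t i x)"
      using sym_monomial_Esym[OF \<open>a + b \<le> d\<close>, of t x] by (simp add: power2_eq_square)
    then show ?thesis
      using Esym_mult_eq_sum_sym_monomial[OF \<open>a + b \<le> d\<close>, of t x, folded \<beta>_def, symmetric]
      by (simp add: sum_subtractf field_simps)
  qed
  ultimately show ?thesis by (rule sos_cong)
qed

lemma sos_Esym_power_minus_Esym_mult:
  assumes sos_t: "\<And>i. i \<in> {1..d} \<Longrightarrow> sos (t i)" and "m * k \<le> d"
  shows "sos (\<lambda>x. Esym d k (\<lambda>i. t i x) ^ m - Esym d (m * k) (\<lambda>i. t i x))"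
  using \<open>m * k \<le> d\<close>
proof (induction m)
  case 0
  then show ?case by (simp add: Esym_0 sos_zero)
next
  case (Suc m)
  then have "k + m * k \<le> d" by simp
  have "sos (\<lambda>x. Esym d k (\<lambda>i. t i x) * (Esym d k (\<lambda>i. t i x) ^ m - Esym d (m * k) (\<lambda>i. t i x)))"
    using Suc by (intro sos_mult sos_Esym[OF sos_t]) simp_all
  moreover have "sos (\<lambda>x. Esym d k (\<lambda>i. t i x) * Esym d (m * k) (\<lambda>i. t i x) - Esym d (k + m * k) (\<lambda>i. t i x))"
    using sos_Esym_mult_minus_Esym_add[OF sos_t \<open>k + m * k \<le> d\<close>] .
  ultimately show ?case
    by (rule sos_cong[OF sos_add]) (simp add: algebra_simps)
qed

subsection \<open>Feasible certificates for SRel\<close>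

lemma sos_power_card_minus_prod:
  assumes "finite I" and "\<forall>i\<in>I. sos (t i) \<and> sos (\<lambda>x. c x - t i x)" and "sos c"
  shows "sos (\<lambda>x. c x ^ card I - (\<Prod>i\<in>I. t i x))"
  using assms
proof (induction I rule: finite_induct)
  case empty
  then show ?case by (simp add: sos_zero)
next
  case (insert a I)
  then have "sos (\<lambda>x. c x * (c x ^ card I - (\<Prod>i\<in>I. t i x)))"
    by (intro sos_mult) simp_all
  moreover have "sos (\<lambda>x. (c x - t a x) * (\<Prod>i\<in>I. t i x))"
    using insert.prems by (intro sos_mult sos_prod) auto
  ultimately show ?case
    by (rule sos_cong[OF sos_add]) (use insert in \<open>simp add: algebra_simps\<close>)
qed

lemma ex_uniform_sos_bound:
  assumes "finite I" and sos_N: "sos N" and bound: "\<And>i. i \<in> I \<Longrightarrow> \<exists>c. sos (\<lambda>x. c * N x - t i x)"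
  shows "\<exists>C\<ge>0. \<forall>i\<in>I. sos (\<lambda>x. C * N x - t i x)"
proof -
  have "\<exists>c. \<forall>i\<in>I. sos (\<lambda>x. c i * N x - t i x)"
    using bound by (intro bchoice) blast
  then obtain c where c: "\<And>i. i \<in> I \<Longrightarrow> sos (\<lambda>x. c i * N x - t i x)"
    by blast
  define C where "C = (\<Sum>i\<in>I. \<bar>c i\<bar>)"
  have "sos (\<lambda>x. C * N x - t i x)" if "i \<in> I" for i
  proof -
    have "\<bar>c i\<bar> \<le> C"
      unfolding C_def using that \<open>finite I\<close> by (intro member_le_sum) auto
    then have "sos (\<lambda>x. (C - c i) * N x + (c i * N x - t i x))"
      by (intro sos_add sos_cmult sos_N c that) simp
    then show ?thesis by (rule sos_cong) (simp add: algebra_simps)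
  qed
  moreover have "0 \<le> C" by (simp add: C_def sum_nonneg)
  ultimately show ?thesis by blast
qed

lemma ex_Esym_certificate:
  assumes sos_N: "sos N" and sos_t: "\<And>i. i \<in> {1..d} \<Longrightarrow> sos (t i)"
    and bound: "\<And>i. i \<in> {1..d} \<Longrightarrow> \<exists>c. sos (\<lambda>x. c * N x - t i x)" and "k \<le> d"
  shows "\<exists>lam\<ge>0. sos (\<lambda>x. lam * N x ^ k - Esym d k (\<lambda>i. t i x))"
proof -
  have "\<exists>C\<ge>0. \<forall>i\<in>{1..d}. sos (\<lambda>x. C * N x - t i x)"
    using ex_uniform_sos_bound[where N = N and t = t, OF finite_atLeastAtMost sos_N bound] .
  then obtain C where "0 \<le> C" and C_bound: "\<And>i. i \<in> {1..d} \<Longrightarrow> sos (\<lambda>x. C * N x - t i x)"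
    by blast
  let ?I = "{I. I \<subseteq> {1..d} \<and> card I = k}"
  have "sos (\<lambda>x. (C * N x) ^ k - (\<Prod>i\<in>I. t i x))" if I: "I \<in> ?I" for I
  proof -
    have "finite I" "I \<subseteq> {1..d}" "card I = k"
      using I finite_subset[OF _ finite_atLeastAtMost] by auto
    then have "\<forall>i\<in>I. sos (t i) \<and> sos (\<lambda>x. C * N x - t i x)"
      using sos_t C_bound by blast
    from sos_power_card_minus_prod[OF \<open>finite I\<close> this sos_cmult[OF \<open>0 \<le> C\<close> sos_N]]
    show ?thesis using \<open>card I = k\<close> by simp
  qed
  then have "sos (\<lambda>x. 1 / real (d choose k) * (\<Sum>I\<in>?I. (C * N x) ^ k - (\<Prod>i\<in>I. t i x)))"
    by (intro sos_cmult sos_sum) auto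
  moreover have "card ?I = d choose k" using n_subsets[of "{1..d}" k] by simp
  then have "1 / real (d choose k) * (\<Sum>I\<in>?I. (C * N x) ^ k - (\<Prod>i\<in>I. t i x))
      = C ^ k * N x ^ k - Esym d k (\<lambda>i. t i x)" for x
    using \<open>k \<le> d\<close> unfolding Esym_def sum_subtractf
    by (simp add: field_simps power_mult_distrib)
  ultimately have "sos (\<lambda>x. C ^ k * N x ^ k - Esym d k (\<lambda>i. t i x))"
    by (rule sos_cong)
  then show ?thesis
    using \<open>0 \<le> C\<close> by (intro exI[of _ "C ^ k"]) simp
qed

lemma Esym_certificate_power:
  assumes sos_N: "sos N" and sos_t: "\<And>i. i \<in> {1..d} \<Longrightarrow> sos (t i)"
    and "m * k \<le> d" and "0 \<le> lam"
    and cert: "sos (\<lambda>x. lam * N x ^ k - Esym d k (\<lambda>i. t i x))"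
  shows "sos (\<lambda>x. lam ^ m * N x ^ (m * k) - Esym d (m * k) (\<lambda>i. t i x))"
proof -
  define a where "a x = lam * N x ^ k" for x
  define b where "b x = Esym d k (\<lambda>i. t i x)" for x
  have "sos (\<lambda>x. \<Sum>i<m. b x ^ (m - Suc i) * a x ^ i)"
    unfolding a_def b_def
    by (intro sos_sum sos_mult sos_power sos_cmult \<open>0 \<le> lam\<close> sos_N sos_Esym[OF sos_t])
  with cert have "sos (\<lambda>x. (a x - b x) * (\<Sum>i<m. b x ^ (m - Suc i) * a x ^ i))"
    unfolding a_def b_def by (rule sos_mult)
  moreover have "sos (\<lambda>x. b x ^ m - Esym d (m * k) (\<lambda>i. t i x))"
    unfolding b_def using sos_Esym_power_minus_Esym_mult[OF sos_t \<open>m * k \<le> d\<close>] .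
  moreover have "(a x - b x) * (\<Sum>i<m. b x ^ (m - Suc i) * a x ^ i) + (b x ^ m - Esym d (m * k) (\<lambda>i. t i x))
      = lam ^ m * N x ^ (m * k) - Esym d (m * k) (\<lambda>i. t i x)" for x
  proof -
    have "a x ^ m = lam ^ m * N x ^ (m * k)"
      unfolding a_def by (simp add: power_mult_distrib power_mult mult.commute)
    then show ?thesis by (simp add: power_diff_sumr2[symmetric])
  qed
  ultimately show ?thesis by (rule sos_cong[OF sos_add])
qed

theorem SRel_gen_mult_le:
  assumes "0 < m" "m * k \<le> d"
    and sos_N: "sos N" and sos_t: "\<And>i. i \<in> {1..d} \<Longrightarrow> sos (t i)"
    and bound: "\<And>i. i \<in> {1..d} \<Longrightarrow> \<exists>c. sos (\<lambda>x. c * N x - t i x)"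
  shows "SRel_gen d (m * k) N t \<le> SRel_gen d k N t"
proof -
  let ?A = "{root k lam | lam. lam \<ge> 0 \<and> sos (\<lambda>x. lam * N x ^ k - Esym d k (\<lambda>i. t i x))}"
  let ?B = "{root (m * k) lam | lam. lam \<ge> 0 \<and> sos (\<lambda>x. lam * N x ^ (m * k) - Esym d (m * k) (\<lambda>i. t i x))}"
  have "k \<le> m * k" using \<open>0 < m\<close> by simp
  then have "k \<le> d" using \<open>m * k \<le> d\<close> by linarith
  then obtain lam where "0 \<le> lam" "sos (\<lambda>x. lam * N x ^ k - Esym d k (\<lambda>i. t i x))"
    using ex_Esym_certificate[where N = N and t = t, OF sos_N sos_t bound \<open>k \<le> d\<close>] by blast
  then have "root k lam \<in> ?A" by blast
  then have "?A \<noteq> {}" by blast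
  moreover have "bdd_below ?B"
    by (rule bdd_belowI[of _ 0]) (auto simp: real_root_ge_zero)
  moreover have "?A \<subseteq> ?B"
  proof clarify
    fix lam :: real
    assume "0 \<le> lam" "sos (\<lambda>x. lam * N x ^ k - Esym d k (\<lambda>i. t i x))"
    then have "sos (\<lambda>x. lam ^ m * N x ^ (m * k) - Esym d (m * k) (\<lambda>i. t i x))"
      using Esym_certificate_power[where N = N and t = t, OF sos_N sos_t \<open>m * k \<le> d\<close>] by blast
    moreover have "root (m * k) (lam ^ m) = root k lam"
      using \<open>0 < m\<close> \<open>0 \<le> lam\<close>
      by (simp add: mult.commute real_root_mult_exp real_root_power_cancel)
    ultimately show "\<exists>lam'. root k lam = root (m * k) lam' \<and> 0 \<le> lam' \<and>
        sos (\<lambda>x. lam' * N x ^ (m * k) - Esym d (m * k) (\<lambda>i. t i x))"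
      using \<open>0 \<le> lam\<close> by (intro exI[of _ "lam ^ m"]) simp
  qed
  ultimately have "Inf ?B \<le> Inf ?A" by (rule cInf_superset_mono)
  then show ?thesis unfolding SRel_gen_def .
qed

lemma SRel_gen_quad_form_mult_le:
  fixes M :: "nat \<Rightarrow> 'v::finite \<Rightarrow> 'v \<Rightarrow> real"
  assumes "0 < m" "m * k \<le> d"
    and psd: "\<And>i x. i \<in> {1..d} \<Longrightarrow> 0 \<le> quad_form (M i) x"
  shows "SRel_gen d (m * k) (\<lambda>x. \<Sum>j\<in>UNIV. (x j)\<^sup>2) (\<lambda>i. quad_form (M i))
       \<le> SRel_gen d k (\<lambda>x. \<Sum>j\<in>UNIV. (x j)\<^sup>2) (\<lambda>i. quad_form (M i))"
proof (rule SRel_gen_mult_le[OF assms(1,2) sos_norm2])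
  fix i assume "i \<in> {1..d}"
  then have "\<forall>x. 0 \<le> quad_form (M i) x" using psd by blast
  then show "sos (quad_form (M i))" "\<exists>c. sos (\<lambda>x. c * (\<Sum>j\<in>UNIV. (x j)\<^sup>2) - quad_form (M i) x)"
    by (rule sos_quad_form, rule psd_quad_form_le_norm2)
qed

subsection \<open>The real and the complex case\<close>

lemma SRel_real_mult_le:
  fixes A :: "nat \<Rightarrow> real^'n^'n"
  assumes "0 < m" "m * k \<le> d" and psd: "\<forall>i\<in>{1..d}. psd_real (A i)"
  shows "SRel_real d (m * k) A \<le> SRel_real d k A"
proof -
  have "0 \<le> quad_form (\<lambda>a b. A i $ a $ b) x" if "i \<in> {1..d}" for i x
  proof -
    have "vec_lambda x \<bullet> (A i *v vec_lambda x) = quad_form (\<lambda>a b. A i $ a $ b) x"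
      by (simp add: quad_form_def inner_vec_def matrix_vector_mult_def sum_distrib_left mult.assoc)
    then show ?thesis using psd that unfolding psd_real_def by metis
  qed
  moreover have "SRel_real d j A
      = SRel_gen d j (\<lambda>x. \<Sum>i\<in>UNIV. (x i)\<^sup>2) (\<lambda>l. quad_form (\<lambda>a b. A l $ a $ b))" for j
    unfolding SRel_real_def quad_form_def ..
  ultimately show ?thesis
    using SRel_gen_quad_form_mult_le[OF assms(1,2)] by metis
qed

text \<open>The real 2n x 2n matrix of the Hermitian form x \<mapsto> <x, A x> in the coordinates
  (Re x_i, Im x_i) used by cvec.\<close>

definition realify :: "complex^'n^'n \<Rightarrow> ('n \<times> bool) \<Rightarrow> ('n \<times> bool) \<Rightarrow> real" where
  "realify A a b = (if snd a = snd b then Re (A $ fst a $ fst b)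
                    else if snd a then - Im (A $ fst a $ fst b) else Im (A $ fst a $ fst b))"

lemma sum_prod_bool:
  fixes f :: "'n::finite \<times> bool \<Rightarrow> real"
  shows "(\<Sum>a\<in>UNIV. f a) = (\<Sum>i\<in>UNIV. f (i, True) + f (i, False))"
proof -
  have "(\<Sum>a\<in>UNIV. f a) = (\<Sum>i\<in>UNIV. \<Sum>b\<in>UNIV. f (i, b))"
    by (simp add: UNIV_Times_UNIV[symmetric] sum.cartesian_product del: UNIV_Times_UNIV)
  then show ?thesis by (simp add: UNIV_bool add.commute)
qed

lemma Re_cquad_cvec: "Re (cquad A (cvec v)) = quad_form (realify A) v"
proof -
  have "quad_form (realify A) v = (\<Sum>i\<in>UNIV. \<Sum>j\<in>UNIV.
      v (i,True) * realify A (i,True) (j,True) * v (j,True) + v (i,True) * realify A (i,True) (j,False) * v (j,False)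
    + (v (i,False) * realify A (i,False) (j,True) * v (j,True) + v (i,False) * realify A (i,False) (j,False) * v (j,False)))"
    unfolding quad_form_def sum_prod_bool by (simp add: sum.distrib)
  also have "\<dots> = (\<Sum>i\<in>UNIV. \<Sum>j\<in>UNIV. Re (cnj (cvec v i) * (A $ i $ j) * cvec v j))"
    by (intro sum.cong refl) (simp add: realify_def cvec_def algebra_simps)
  finally show ?thesis by (simp add: cquad_def)
qed

lemma SRel_complex_mult_le:
  fixes A :: "nat \<Rightarrow> complex^'n^'n"
  assumes "0 < m" "m * k \<le> d" and psd: "\<forall>i\<in>{1..d}. psd_complex (A i)"
  shows "SRel_complex d (m * k) A \<le> SRel_complex d k A"
proof -
  have "(\<lambda>v::'n \<times> bool \<Rightarrow> real. \<Sum>i\<in>UNIV. (cmod (cvec v i))\<^sup>2) = (\<lambda>v. \<Sum>a\<in>UNIV. (v a)\<^sup>2)"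
  proof (rule ext)
    fix v :: "'n \<times> bool \<Rightarrow> real"
    show "(\<Sum>i\<in>UNIV. (cmod (cvec v i))\<^sup>2) = (\<Sum>a\<in>UNIV. (v a)\<^sup>2)"
      using sum_prod_bool[of "\<lambda>a. (v a)\<^sup>2"] by (simp add: cmod_power2 cvec_def)
  qed
  moreover have "(\<lambda>l v. Re (cquad (A l) (cvec v))) = (\<lambda>l. quad_form (realify (A l)))"
    by (simp add: Re_cquad_cvec)
  moreover have "0 \<le> quad_form (realify (A i)) x" if "i \<in> {1..d}" for i x
    using psd that Re_cquad_cvec[of "A i" x] unfolding psd_complex_def by metis
  ultimately show ?thesis
    unfolding SRel_complex_def using SRel_gen_quad_form_mult_le[OF assms(1,2)] by metis
qed

theorem mainTheorem13:
  fixes d k m :: nat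
  assumes "0 < k" and "0 < m" and "m * k \<le> d"
  shows "(\<forall>A :: nat \<Rightarrow> real^'n^'n. (\<forall>i\<in>{1..d}. psd_real (A i)) \<longrightarrow>
            SRel_real d (m * k) A \<le> SRel_real d k A)
       \<and> (\<forall>A :: nat \<Rightarrow> complex^'n^'n. (\<forall>i\<in>{1..d}. psd_complex (A i)) \<longrightarrow>
            SRel_complex d (m * k) A \<le> SRel_complex d k A)"
  using SRel_real_mult_le[OF assms(2,3)] SRel_complex_mult_le[OF assms(2,3)] by blast

end
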